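(* Let $p=4k+1$ be a prime and let $S\subset\mathbb{P}^5$ be the surface over $\mathbb{F}_p$ with homogeneous coordinates $x_0,\ldots,x_5$ defined by $$x_1^2-x_2^2=x_3^2,\qquad x_0^2-x_1^2=x_4^2,\qquad x_0^2-x_2^2=x_5^2 .$$ Let $S^0\subset S$ be the set of points all of whose coordinates are nonzero. Then $$|S^0(\mathbb{F}_p)|=|S(\mathbb{F}_p)|-24p+80,$$ and hence $$n_p(K_4)=\frac{1}{64}\cdot\frac{1}{24}\cdot(p-1)\big(|S(\mathbb{F}_p)|-24p+80\big).$$
   Context: For $p\equiv 1\pmod 4$, $n_p(K_4)$ is the number of $4$-tuples $(r_1,r_2,r_3,r_4)$ of pairwise distinct residues modulo $p$ such that all differences $r_i-r_j$ ($i\neq j$) are nonzero quadratic residues mod $p$, where tuples differing by a permutation of entries or by adding the same residue to all entries are identified. *)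

theory Defs
  imports "HOL-Number_Theory.Number_Theory"
begin

text \<open>Elements of F_p are represented by integers in {0..<p}; a vector in F_p^6
  is an int list of length 6 with entries in {0..<p} (index i = coordinate x_i).\<close>

definition Fp_vecs :: "int \<Rightarrow> int list set" where
  "Fp_vecs p = {x. length x = 6 \<and> set x \<subseteq> {0..<p}}"

definition on_S :: "int \<Rightarrow> int list \<Rightarrow> bool" where
  "on_S p x \<longleftrightarrow>
     [x!1^2 - x!2^2 = x!3^2] (mod p) \<and>
     [x!0^2 - x!1^2 = x!4^2] (mod p) \<and>
     [x!0^2 - x!2^2 = x!5^2] (mod p)"

definition proj_pt :: "int \<Rightarrow> int list \<Rightarrow> int list set" where
  "proj_pt p x = {map (\<lambda>a. (c * a) mod p) x | c. c \<in> {1..<p}}"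

definition S_pts :: "int \<Rightarrow> int list set set" where
  "S_pts p = {proj_pt p x | x. x \<in> Fp_vecs p \<and> x \<noteq> replicate 6 0 \<and> on_S p x}"

definition S0_pts :: "int \<Rightarrow> int list set set" where
  "S0_pts p = {proj_pt p x | x. x \<in> Fp_vecs p \<and> (\<forall>i<6. x!i \<noteq> 0) \<and> on_S p x}"

text \<open>n_p(K_4): 4-tuples of pairwise distinct residues with all differences nonzero
  quadratic residues, modulo permutation (so: 4-element subsets) and modulo
  common translation.\<close>
definition K4_sets :: "int \<Rightarrow> int set set" where
  "K4_sets p = {A. A \<subseteq> {0..<p} \<and> card A = 4 \<and>
                  (\<forall>a\<in>A. \<forall>b\<in>A. a \<noteq> b \<longrightarrow> QuadRes p (a - b))}"

definition transl_class :: "int \<Rightarrow> int set \<Rightarrow> int set set" where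
  "transl_class p A = {(\<lambda>a. (a + t) mod p) ` A | t. t \<in> {0..<p}}"

definition n_K4 :: "int \<Rightarrow> nat" where
  "n_K4 p = card {transl_class p A | A. A \<in> K4_sets p}"

end

theory Submission
  imports Defs
begin

(*
  For a point x = (x0, ..., x5) of the affine cone over S put (a, b, c) = (x4^2, x5^2, x0^2).
  The equations of S say exactly that x1^2 = c - a, x2^2 = c - b and x3^2 = b - a, so the number
  of points over (a, b, c) is the product of N(d) = #{y. y^2 = d} over the six differences of the
  four residues 0, a, b, c. As p = 1 mod 4, -1 is a square and N(-d) = N(d).

  All coordinates are nonzero iff 0, a, b, c are distinct. The fibre then has 64 points if all six
  differences are squares, i.e. if {0, a, b, c} is a K4-set, and is empty otherwise. Every
  translation class of K4-sets contains exactly four sets through 0, each of which arises from 3!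
  triples (a, b, c), so the cone over S^0 has 64 * 24 * n_p(K4) points.

  The other nonzero points lie over the degenerate configurations, where some but not all of
  0, a, b, c coincide. They form 13 families parametrised by one or two free residues, and the
  fibre sums over them reduce to sum_x N(x) = p - 1 and to the identity sum_b N(b) N(b - a) = p - 1
  (a /= 0), which counts the solutions of v^2 - w^2 = a. The total is (p - 1)(24p - 80), and
  dividing by the p - 1 nonzero scalars gives the projective counts.
*)

lemma card_eq_sum_card_fibres:
  assumes "finite S" "finite T" "g ` S \<subseteq> T"
  shows "card S = (\<Sum>y\<in>T. card {x\<in>S. g x = y})"
  using sum.group[OF assms, of "\<lambda>_. 1::nat"] by simp

lemma sum_if_bij_betw:
  assumes "finite B" "bij_betw e A {r\<in>B. P r}"
  shows "(\<Sum>r\<in>B. if P r then f r else 0) = (\<Sum>x\<in>A. f (e x))"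
  using assms by (simp add: sum.inter_filter[symmetric] sum.reindex_bij_betw)

lemma cong_diff_solve_right:
  "[x = b] (mod m) \<Longrightarrow> [y = a] (mod m) \<Longrightarrow> [x - y = z] (mod m) \<longleftrightarrow> [z = b - a] (mod m)"
  for x y z a b m :: int
  by (meson cong_diff cong_sym cong_trans)

lemma cong_diff_solve_left:
  "[x = b] (mod m) \<Longrightarrow> [z = a] (mod m) \<Longrightarrow> [x - y = z] (mod m) \<longleftrightarrow> [y = b - a] (mod m)"
  for x y z a b m :: int
proof -
  have "(x - y) - z = (x - b) - (z - a) - (y - (b - a))"
    and "y - (b - a) = (x - b) - (z - a) - ((x - y) - z)"
    by simp_all
  then show "[x = b] (mod m) \<Longrightarrow> [z = a] (mod m) \<Longrightarrow> ?thesis"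
    unfolding cong_iff_dvd_diff by (metis dvd_diff)
qed

lemma length_6_cases:
  assumes "length x = 6"
  obtains y0 y1 y2 y3 y4 y5 where "x = [y0, y1, y2, y3, y4, y5]"
  using assms by (auto simp: numeral_eq_Suc length_Suc_conv)

definition list6 :: "'a \<times> 'a \<times> 'a \<times> 'a \<times> 'a \<times> 'a \<Rightarrow> 'a list" where
  "list6 = (\<lambda>(y0, y1, y2, y3, y4, y5). [y0, y1, y2, y3, y4, y5])"

lemma inj_list6: "inj list6"
  by (rule injI) (auto simp: list6_def)

lemma on_S_iff_squares:
  assumes "[y0^2 = c] (mod m)" "[y4^2 = a] (mod m)" "[y5^2 = b] (mod m)"
  shows "on_S m [y0, y1, y2, y3, y4, y5] \<longleftrightarrow>
           [y1^2 = c - a] (mod m) \<and> [y2^2 = c - b] (mod m) \<and> [y3^2 = b - a] (mod m)"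
proof -
  have "[y1^2 - y2^2 = y3^2] (mod m) \<longleftrightarrow> [y3^2 = b - a] (mod m)"
    if "[y1^2 = c - a] (mod m)" "[y2^2 = c - b] (mod m)"
    using cong_diff_solve_right[OF that] by simp
  then show ?thesis
    using cong_diff_solve_left[OF assms(1,2)] cong_diff_solve_left[OF assms(1,3)]
    by (auto simp: on_S_def)
qed

section \<open>Square roots modulo an odd prime\<close>

locale odd_prime =
  fixes p :: int
  assumes prime: "prime p" and p_gt_2: "2 < p"
begin

lemma not_dvd_2: "\<not> p dvd 2"
  using p_gt_2 by (auto dest: zdvd_imp_le)

lemma dvd_mult_iff: "p dvd a * b \<longleftrightarrow> p dvd a \<or> p dvd b"
  using prime by (rule prime_dvd_mult_iff)

lemma dvd_2_mult_iff: "p dvd 2 * a \<longleftrightarrow> p dvd a"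
  using not_dvd_2 by (simp add: dvd_mult_iff)

lemma residue_dvd_diff_iff:
  assumes "a \<in> {0..<p}" "b \<in> {0..<p}"
  shows "p dvd a - b \<longleftrightarrow> a = b"
  using assms by (auto simp: mod_eq_dvd_iff[symmetric])

lemma residue_dvd_iff: "a \<in> {0..<p} \<Longrightarrow> p dvd a \<longleftrightarrow> a = 0"
  using residue_dvd_diff_iff[of a 0] p_gt_2 by simp

lemma residue_cong_iff: "x \<in> {0..<p} \<Longrightarrow> [y = x] (mod p) \<longleftrightarrow> y mod p = x"
  by (simp add: cong_def)

lemma cong_square_iff: "[z^2 = y^2] (mod p) \<longleftrightarrow> [z = y] (mod p) \<or> [z = -y] (mod p)"
proof -
  have "z^2 - y^2 = (z - y) * (z - (-y))" by (simp add: power2_eq_square algebra_simps)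
  then show ?thesis by (simp add: cong_iff_dvd_diff dvd_mult_iff)
qed

lemma mod_in_residues: "x mod p \<in> {0..<p}"
  using p_gt_2 by simp

lemma mod_in_units: "\<not> p dvd x \<Longrightarrow> x mod p \<in> {1..<p}"
  using mod_in_residues[of x] by (auto simp: dvd_eq_mod_eq_0)

lemma inverse_exists: "\<not> p dvd s \<Longrightarrow> \<exists>s'\<in>{1..<p}. [s' * s = 1] (mod p)"
proof -
  assume "\<not> p dvd s"
  then have "coprime s p" using prime by (simp add: prime_imp_coprime coprime_commute)
  then obtain x where x: "[s * x = 1] (mod p)" using cong_solve_coprime_int by blast
  have "\<not> p dvd x"
  proof
    assume "p dvd x"
    then have "[s * x = 0] (mod p)" by (simp add: cong_0_iff)
    with x have "p dvd 1" by (metis cong_0_iff cong_sym cong_trans)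
    then show False using p_gt_2 by simp
  qed
  then have "x mod p \<in> {1..<p}" by (rule mod_in_units)
  moreover have "[x mod p * s = 1] (mod p)"
    using x by (metis cong_def mod_mult_left_eq mult.commute)
  ultimately show ?thesis by blast
qed

definition sqrts :: "int \<Rightarrow> int set" where
  "sqrts d = {y \<in> {0..<p}. [y^2 = d] (mod p)}"

definition nsqrt :: "int \<Rightarrow> int" where
  "nsqrt d = int (card (sqrts d))"

lemma sqrts_dvd: "p dvd d \<Longrightarrow> sqrts d = {0}"
  using p_gt_2 residue_dvd_iff prime_dvd_power_iff[OF prime, of 2]
  by (auto simp: sqrts_def cong_0_iff[symmetric] intro: cong_trans cong_sym)

lemma sqrts_not_dvd:
  assumes "\<not> p dvd d" "y \<in> sqrts d"
  shows "sqrts d = {y, p - y}" "y \<noteq> p - y"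
proof -
  have y: "y \<in> {0..<p}" "[y^2 = d] (mod p)" using assms(2) by (auto simp: sqrts_def)
  have "y \<noteq> 0" using y assms(1) by (auto simp: cong_0_iff[symmetric] dest: cong_sym)
  then have minus_y: "(-y) mod p = p - y" using y(1) by (simp add: zmod_zminus1_eq_if)
  have "[(p - y)^2 = y^2] (mod p)"
    by (simp add: cong_iff_dvd_diff power2_eq_square algebra_simps)
  then have "p - y \<in> sqrts d" using y \<open>y \<noteq> 0\<close> by (auto simp: sqrts_def intro: cong_trans)
  moreover have "z \<in> {y, p - y}" if "z \<in> sqrts d" for z
  proof -
    have "z \<in> {0..<p}" "[z^2 = y^2] (mod p)"
      using that y by (auto simp: sqrts_def intro: cong_trans cong_sym)
    then have "[z = y] (mod p) \<or> [z = -y] (mod p)" by (simp add: cong_square_iff)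
    then show ?thesis using \<open>z \<in> {0..<p}\<close> y(1) minus_y by (auto simp: cong_def)
  qed
  ultimately show "sqrts d = {y, p - y}" using assms(2) by blast
  show "y \<noteq> p - y"
  proof
    assume "y = p - y"
    then have "p dvd 2 * y" by simp
    then show False using \<open>y \<noteq> 0\<close> y(1) by (simp add: dvd_2_mult_iff residue_dvd_iff)
  qed
qed

lemma sqrts_eq_0_iff: "y \<in> sqrts d \<Longrightarrow> y = 0 \<longleftrightarrow> p dvd d"
  using sqrts_dvd by (auto simp: sqrts_def cong_0_iff dest: cong_sym)

lemma nsqrt_eq: "nsqrt d = (if p dvd d then 1 else if QuadRes p d then 2 else 0)"
proof -
  have "sqrts d \<noteq> {} \<longleftrightarrow> QuadRes p d"
  proof
    assume "QuadRes p d"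
    then obtain y where "[y^2 = d] (mod p)" by (auto simp: QuadRes_def)
    then have "y mod p \<in> sqrts d"
      using mod_in_residues by (auto simp: sqrts_def cong_def power_mod)
    then show "sqrts d \<noteq> {}" by blast
  qed (auto simp: sqrts_def QuadRes_def)
  then show ?thesis
    using sqrts_dvd sqrts_not_dvd by (force simp: nsqrt_def)
qed

lemma nsqrt_dvd: "p dvd d \<Longrightarrow> nsqrt d = 1"
  by (simp add: nsqrt_eq)

lemma nsqrt_not_dvd_cases: "\<not> p dvd d \<Longrightarrow> nsqrt d = 0 \<or> nsqrt d = 2"
  by (simp add: nsqrt_eq)

lemma sum_nsqrt: "(\<Sum>d\<in>{0..<p}. nsqrt d) = p"
proof -
  have "card {0..<p} = (\<Sum>d\<in>{0..<p}. card {y\<in>{0..<p}. y^2 mod p = d})"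
    by (rule card_eq_sum_card_fibres) (use mod_in_residues in auto)
  also have "\<dots> = (\<Sum>d\<in>{0..<p}. card (sqrts d))"
    by (rule sum.cong) (auto simp: sqrts_def cong_def)
  finally have "int (card {0..<p}) = (\<Sum>d\<in>{0..<p}. int (card (sqrts d)))" by simp
  then show ?thesis using p_gt_2 by (simp add: nsqrt_def)
qed

lemma card_product_solutions:
  assumes "\<not> p dvd a"
  shows "int (card {(s, t) \<in> {0..<p} \<times> {0..<p}. [s * t = a] (mod p)}) = p - 1"
proof -
  have fibre: "card {t \<in> {0..<p}. [s * t = a] (mod p)} = (if s = 0 then 0 else 1)"
    if s: "s \<in> {0..<p}" for s
  proof (cases "s = 0")
    case True
    have "\<not> [0 = a] (mod p)" using assms cong_0_iff cong_sym by blast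
    then show ?thesis using True by simp
  next
    case False
    then obtain s' where s': "[s' * s = 1] (mod p)"
      using inverse_exists residue_dvd_iff[OF s] by blast
    define t0 where "t0 = (s' * a) mod p"
    have uniq: "t = t0" if "t \<in> {0..<p}" "[s * t = a] (mod p)" for t
    proof -
      have "[t = s' * s * t] (mod p)" using cong_scalar_right[OF s', of t] by (simp add: cong_sym)
      also have "[s' * s * t = s' * a] (mod p)"
        using cong_scalar_left[OF that(2), of s'] by (simp add: mult.assoc)
      finally show ?thesis using that(1) by (simp add: cong_def t0_def)
    qed
    have "[s * (s' * a) = a] (mod p)"
      using cong_scalar_right[OF s', of a] by (simp add: algebra_simps)
    then have "t0 \<in> {0..<p}" "[s * t0 = a] (mod p)"
      using mod_in_residues by (auto simp: t0_def cong_def mod_mult_right_eq)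
    then have "{t \<in> {0..<p}. [s * t = a] (mod p)} = {t0}" using uniq by blast
    then show ?thesis using False by simp
  qed
  have "card {(s, t) \<in> {0..<p} \<times> {0..<p}. [s * t = a] (mod p)} =
        card (SIGMA s:{0..<p}. {t \<in> {0..<p}. [s * t = a] (mod p)})"
    by (rule arg_cong[where f = card]) auto
  also have "\<dots> = (\<Sum>s\<in>{0..<p}. card {t \<in> {0..<p}. [s * t = a] (mod p)})"
    by (rule card_SigmaI) (simp_all del: atLeastLessThan_iff)
  also have "\<dots> = (\<Sum>s\<in>{0..<p}. if s = 0 then 0 else 1)" by (rule sum.cong[OF refl fibre])
  also have "\<dots> = card ({0..<p} - {0})" by (simp add: sum.If_cases Diff_eq)
  finally show ?thesis using p_gt_2 by simp
qed

definition half :: int where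
  "half = (p + 1) div 2"

lemma cong_mult_2_half: "[x * 2 * half = x] (mod p)"
proof -
  have "2 * half = p + 1" using prime_odd_int[OF prime p_gt_2] unfolding half_def by presburger
  then show ?thesis by (simp add: cong_iff_dvd_diff mult.assoc distrib_left)
qed

lemma halve_diff_sum:
  "[((v - w) mod p + (v + w) mod p) * half = v] (mod p)"
  "[((v + w) mod p - (v - w) mod p) * half = w] (mod p)"
proof -
  have "[((v - w) mod p + (v + w) mod p) * half = ((v - w) + (v + w)) * half] (mod p)"
    by (intro cong_add cong_mult) simp_all
  also have "((v - w) + (v + w)) * half = v * 2 * half" by (simp add: algebra_simps)
  also note cong_mult_2_half
  finally show "[((v - w) mod p + (v + w) mod p) * half = v] (mod p)" .
  have "[((v + w) mod p - (v - w) mod p) * half = ((v + w) - (v - w)) * half] (mod p)"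
    by (intro cong_diff cong_mult) simp_all
  also have "((v + w) - (v - w)) * half = w * 2 * half" by (simp add: algebra_simps)
  also note cong_mult_2_half
  finally show "[((v + w) mod p - (v - w) mod p) * half = w] (mod p)" .
qed

lemma diff_sum_halves:
  "[(s + t) * half mod p - (t - s) * half mod p = s] (mod p)"
  "[(s + t) * half mod p + (t - s) * half mod p = t] (mod p)"
proof -
  have "[(s + t) * half mod p - (t - s) * half mod p = (s + t) * half - (t - s) * half] (mod p)"
    by (intro cong_diff) simp_all
  also have "(s + t) * half - (t - s) * half = s * 2 * half" by (simp add: algebra_simps)
  also note cong_mult_2_half
  finally show "[(s + t) * half mod p - (t - s) * half mod p = s] (mod p)" .
  have "[(s + t) * half mod p + (t - s) * half mod p = (s + t) * half + (t - s) * half] (mod p)"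
    by (intro cong_add) simp_all
  also have "(s + t) * half + (t - s) * half = t * 2 * half" by (simp add: algebra_simps)
  also note cong_mult_2_half
  finally show "[(s + t) * half mod p + (t - s) * half mod p = t] (mod p)" .
qed

lemma card_diff_square_solutions:
  assumes "\<not> p dvd a"
  shows "int (card {(v, w) \<in> {0..<p} \<times> {0..<p}. [v^2 - w^2 = a] (mod p)}) = p - 1"
proof -
  let ?f = "\<lambda>(v, w). ((v - w) mod p, (v + w) mod p)"
  let ?g = "\<lambda>(s, t). (((s + t) * half) mod p, ((t - s) * half) mod p)"
  have f_sol: "[(v - w) mod p * ((v + w) mod p) = a] (mod p)" if "[v^2 - w^2 = a] (mod p)" for v w
  proof -
    have "[(v - w) mod p * ((v + w) mod p) = (v - w) * (v + w)] (mod p)"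
      by (intro cong_mult) simp_all
    also have "(v - w) * (v + w) = v^2 - w^2" by (simp add: power2_eq_square algebra_simps)
    also note that
    finally show ?thesis .
  qed
  have g_sol: "[((s + t) * half mod p)^2 - ((t - s) * half mod p)^2 = a] (mod p)"
    if "[s * t = a] (mod p)" for s t
  proof -
    have "[((s + t) * half mod p)^2 - ((t - s) * half mod p)^2 =
           ((s + t) * half)^2 - ((t - s) * half)^2] (mod p)"
      by (intro cong_diff cong_pow) simp_all
    also have "((s + t) * half)^2 - ((t - s) * half)^2 = (s * t * 2 * half) * 2 * half"
      by (simp add: power2_eq_square algebra_simps)
    also have "[(s * t * 2 * half) * 2 * half = s * t] (mod p)"
      using cong_mult_2_half by (metis cong_trans)
    also note that
    finally show ?thesis .
  qed
  have "bij_betw ?f {(v, w) \<in> {0..<p} \<times> {0..<p}. [v^2 - w^2 = a] (mod p)}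
                    {(s, t) \<in> {0..<p} \<times> {0..<p}. [s * t = a] (mod p)}"
    (is "bij_betw _ ?X ?Y")
  proof (rule bij_betw_byWitness[where f' = ?g])
    show "\<forall>z\<in>?X. ?g (?f z) = z" "\<forall>z\<in>?Y. ?f (?g z) = z"
      using halve_diff_sum diff_sum_halves by (auto simp: cong_def)
    show "?f ` ?X \<subseteq> ?Y" "?g ` ?Y \<subseteq> ?X"
      using f_sol g_sol mod_in_residues by (fastforce simp del: atLeastLessThan_iff)+
  qed
  then have "card ?X = card ?Y" by (rule bij_betw_same_card)
  then show ?thesis using card_product_solutions[OF assms] by (simp only:)
qed

lemma sum_nsqrt_mult_shift:
  assumes "\<not> p dvd a"
  shows "(\<Sum>b\<in>{0..<p}. nsqrt b * nsqrt (b - a)) = p - 1"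
proof -
  let ?X = "{(v, w) \<in> {0..<p} \<times> {0..<p}. [v^2 - w^2 = a] (mod p)}"
  have fibre: "{z \<in> ?X. (fst z)^2 mod p = b} = sqrts b \<times> sqrts (b - a)" if b: "b \<in> {0..<p}" for b
  proof (rule equalityI; rule subsetI)
    fix z assume "z \<in> {z \<in> ?X. (fst z)^2 mod p = b}"
    then obtain v w where "z = (v, w)" "(v, w) \<in> ?X" "v^2 mod p = b" by auto
    then show "z \<in> sqrts b \<times> sqrts (b - a)"
      using cong_diff_solve_left[of "v^2" b p a a "w^2"] by (auto simp: sqrts_def cong_def)
  next
    fix z assume "z \<in> sqrts b \<times> sqrts (b - a)"
    then obtain v w where "z = (v, w)" "v \<in> sqrts b" "w \<in> sqrts (b - a)" by auto
    then show "z \<in> {z \<in> ?X. (fst z)^2 mod p = b}"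
      using cong_diff_solve_left[of "v^2" b p a a "w^2"] b
      by (auto simp: sqrts_def residue_cong_iff)
  qed
  have "finite ?X" by (rule finite_subset[of _ "{0..<p} \<times> {0..<p}"]) auto
  then have "card ?X = (\<Sum>b\<in>{0..<p}. card {z \<in> ?X. (fst z)^2 mod p = b})"
    by (rule card_eq_sum_card_fibres) (auto simp: mod_in_residues)
  also have "\<dots> = (\<Sum>b\<in>{0..<p}. card (sqrts b \<times> sqrts (b - a)))"
    by (rule sum.cong[OF refl]) (simp only: fibre)
  finally have "int (card ?X) = (\<Sum>b\<in>{0..<p}. nsqrt b * nsqrt (b - a))"
    by (simp add: nsqrt_def card_cartesian_product)
  then show ?thesis using card_diff_square_solutions[OF assms] by simp
qed

lemma sum_nsqrt_units: "(\<Sum>x\<in>{1..<p}. nsqrt x) = p - 1"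
proof -
  have "{0..<p} = insert 0 {1..<p}" using p_gt_2 by auto
  then show ?thesis using sum_nsqrt nsqrt_dvd[of 0] by simp
qed

section \<open>The affine cone over S\<close>

definition cone :: "int list set" where
  "cone = {x \<in> Fp_vecs p. on_S p x}"

definition square_triple :: "int list \<Rightarrow> int \<times> int \<times> int" where
  "square_triple x = ((x!4)^2 mod p, (x!5)^2 mod p, (x!0)^2 mod p)"

definition weight :: "int \<times> int \<times> int \<Rightarrow> int" where
  "weight = (\<lambda>(a, b, c).
     nsqrt c * nsqrt (c - a) * nsqrt (c - b) * nsqrt (b - a) * nsqrt a * nsqrt b)"

definition root_box :: "int \<Rightarrow> int \<Rightarrow> int \<Rightarrow> (int \<times> int \<times> int \<times> int \<times> int \<times> int) set" where
  "root_box a b c = sqrts c \<times> sqrts (c - a) \<times> sqrts (c - b) \<times> sqrts (b - a) \<times> sqrts a \<times> sqrts b"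

abbreviation residue_triples :: "(int \<times> int \<times> int) set" where
  "residue_triples \<equiv> {0..<p} \<times> {0..<p} \<times> {0..<p}"

lemma finite_cone: "finite cone"
proof (rule finite_subset)
  show "cone \<subseteq> {xs. set xs \<subseteq> {0..<p} \<and> length xs = 6}" by (auto simp: cone_def Fp_vecs_def)
qed (simp add: finite_lists_length_eq)

lemma square_triple_in_residue_triples: "square_triple x \<in> residue_triples"
  by (simp add: square_triple_def mod_in_residues del: atLeastLessThan_iff)

lemma cone_fibre:
  assumes abc: "a \<in> {0..<p}" "b \<in> {0..<p}" "c \<in> {0..<p}"
  shows "{x \<in> cone. square_triple x = (a, b, c)} = list6 ` root_box a b c"
proof (rule equalityI; rule subsetI)
  fix x assume x: "x \<in> {x \<in> cone. square_triple x = (a, b, c)}"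
  then obtain y0 y1 y2 y3 y4 y5 where x_eq: "x = [y0, y1, y2, y3, y4, y5]"
    by (auto simp: cone_def Fp_vecs_def elim: length_6_cases)
  have y: "y0 \<in> {0..<p}" "y1 \<in> {0..<p}" "y2 \<in> {0..<p}" "y3 \<in> {0..<p}" "y4 \<in> {0..<p}"
    "y5 \<in> {0..<p}" "on_S p [y0, y1, y2, y3, y4, y5]"
    using x by (auto simp: x_eq cone_def Fp_vecs_def)
  have squares: "[y0^2 = c] (mod p)" "[y4^2 = a] (mod p)" "[y5^2 = b] (mod p)"
    using x abc by (auto simp: x_eq square_triple_def residue_cong_iff)
  then have "[y1^2 = c - a] (mod p)" "[y2^2 = c - b] (mod p)" "[y3^2 = b - a] (mod p)"
    using y(7) on_S_iff_squares by blast+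
  then show "x \<in> list6 ` root_box a b c"
    using y squares unfolding x_eq list6_def
    by (intro image_eqI[where x = "(y0, y1, y2, y3, y4, y5)"])
      (simp_all add: root_box_def sqrts_def)
next
  fix x assume "x \<in> list6 ` root_box a b c"
  then obtain y0 y1 y2 y3 y4 y5 where x: "x = [y0, y1, y2, y3, y4, y5]"
    and y: "y0 \<in> sqrts c" "y1 \<in> sqrts (c - a)" "y2 \<in> sqrts (c - b)" "y3 \<in> sqrts (b - a)"
           "y4 \<in> sqrts a" "y5 \<in> sqrts b"
    by (auto simp: list6_def root_box_def)
  then have "on_S p x" using on_S_iff_squares[of y0 c p y4 a y5 b] by (simp add: sqrts_def)
  then show "x \<in> {x \<in> cone. square_triple x = (a, b, c)}"
    using x y abc by (auto simp: cone_def Fp_vecs_def square_triple_def sqrts_def residue_cong_iff)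
qed

lemma card_cone_fibre:
  assumes "a \<in> {0..<p}" "b \<in> {0..<p}" "c \<in> {0..<p}"
  shows "int (card {x \<in> cone. square_triple x = (a, b, c)}) = weight (a, b, c)"
  unfolding cone_fibre[OF assms] card_image[OF inj_on_subset[OF inj_list6 subset_UNIV]]
  by (simp add: root_box_def card_cartesian_product nsqrt_def weight_def)

lemma card_cone_preimage:
  assumes "R \<subseteq> residue_triples"
  shows "int (card {x \<in> cone. square_triple x \<in> R}) = (\<Sum>r\<in>R. weight r)"
proof -
  have "finite R" using assms by (rule finite_subset) simp
  have "card {x \<in> cone. square_triple x \<in> R} =
        (\<Sum>r\<in>R. card {x \<in> {x \<in> cone. square_triple x \<in> R}. square_triple x = r})"
    by (rule card_eq_sum_card_fibres) (use finite_cone \<open>finite R\<close> in auto)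
  also have "\<dots> = (\<Sum>r\<in>R. card {x \<in> cone. square_triple x = r})"
    by (rule sum.cong[OF refl], rule arg_cong[where f = card]) auto
  finally have "int (card {x \<in> cone. square_triple x \<in> R}) =
                (\<Sum>r\<in>R. int (card {x \<in> cone. square_triple x = r}))"
    by simp
  also have "\<dots> = (\<Sum>r\<in>R. weight r)"
    using assms by (intro sum.cong) (auto simp: card_cone_fibre)
  finally show ?thesis .
qed

lemma cone_coord_eq_0_iff:
  assumes "x \<in> cone" "square_triple x = (a, b, c)"
  shows "x!0 = 0 \<longleftrightarrow> c = 0" "x!1 = 0 \<longleftrightarrow> c = a" "x!2 = 0 \<longleftrightarrow> c = b"
    "x!3 = 0 \<longleftrightarrow> b = a" "x!4 = 0 \<longleftrightarrow> a = 0" "x!5 = 0 \<longleftrightarrow> b = 0"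
proof -
  have abc: "a \<in> {0..<p}" "b \<in> {0..<p}" "c \<in> {0..<p}"
    using square_triple_in_residue_triples[of x] assms(2) by auto
  then have "x \<in> list6 ` root_box a b c" using assms cone_fibre by blast
  then obtain y0 y1 y2 y3 y4 y5 where x: "x = [y0, y1, y2, y3, y4, y5]"
    and y: "y0 \<in> sqrts c" "y1 \<in> sqrts (c - a)" "y2 \<in> sqrts (c - b)" "y3 \<in> sqrts (b - a)"
           "y4 \<in> sqrts a" "y5 \<in> sqrts b"
    by (auto simp: list6_def root_box_def)
  show "x!0 = 0 \<longleftrightarrow> c = 0" "x!1 = 0 \<longleftrightarrow> c = a" "x!2 = 0 \<longleftrightarrow> c = b"
    "x!3 = 0 \<longleftrightarrow> b = a" "x!4 = 0 \<longleftrightarrow> a = 0" "x!5 = 0 \<longleftrightarrow> b = 0"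
    using y[THEN sqrts_eq_0_iff] abc by (simp_all add: x residue_dvd_iff residue_dvd_diff_iff)
qed

definition distinct_triples :: "(int \<times> int \<times> int) set" where
  "distinct_triples = {(a, b, c) \<in> residue_triples. distinct [0, a, b, c]}"

definition degenerate_triples :: "(int \<times> int \<times> int) set" where
  "degenerate_triples =
     {(a, b, c) \<in> residue_triples. \<not> distinct [0, a, b, c] \<and> (a, b, c) \<noteq> (0, 0, 0)}"

lemma finite_distinct_triples: "finite distinct_triples"
  by (rule finite_subset[of _ residue_triples]) (auto simp: distinct_triples_def)

lemma cone_units_iff:
  assumes x: "x \<in> cone"
  shows "(\<forall>i<6. x!i \<noteq> 0) \<longleftrightarrow> square_triple x \<in> distinct_triples"
proof -
  obtain a b c where abc: "square_triple x = (a, b, c)" by (cases "square_triple x")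
  have "length x = 6" using x by (simp add: cone_def Fp_vecs_def)
  then obtain y0 y1 y2 y3 y4 y5 where x_eq: "x = [y0, y1, y2, y3, y4, y5]" by (rule length_6_cases)
  have "(\<forall>i<6. x!i \<noteq> 0) \<longleftrightarrow> 0 \<notin> set x"
    using \<open>length x = 6\<close> all_set_conv_all_nth[of x "\<lambda>y. y \<noteq> 0"] by auto
  also have "\<dots> \<longleftrightarrow> x!0 \<noteq> 0 \<and> x!1 \<noteq> 0 \<and> x!2 \<noteq> 0 \<and> x!3 \<noteq> 0 \<and> x!4 \<noteq> 0 \<and> x!5 \<noteq> 0"
    by (simp add: x_eq)
  also have "\<dots> \<longleftrightarrow> c \<noteq> 0 \<and> c \<noteq> a \<and> c \<noteq> b \<and> b \<noteq> a \<and> a \<noteq> 0 \<and> b \<noteq> 0"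
    by (simp only: cone_coord_eq_0_iff[OF x abc])
  also have "\<dots> \<longleftrightarrow> distinct [0, a, b, c]" by auto
  finally show ?thesis
    using square_triple_in_residue_triples[of x] by (simp add: abc distinct_triples_def)
qed

lemma cone_zero_iff:
  assumes x: "x \<in> cone"
  shows "x = replicate 6 0 \<longleftrightarrow> square_triple x = (0, 0, 0)"
proof -
  obtain a b c where abc: "square_triple x = (a, b, c)" by (cases "square_triple x")
  have "length x = 6" using x by (simp add: cone_def Fp_vecs_def)
  then obtain y0 y1 y2 y3 y4 y5 where x_eq: "x = [y0, y1, y2, y3, y4, y5]" by (rule length_6_cases)
  have "x = replicate 6 0 \<longleftrightarrow> x!0 = 0 \<and> x!1 = 0 \<and> x!2 = 0 \<and> x!3 = 0 \<and> x!4 = 0 \<and> x!5 = 0"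
    by (simp add: x_eq numeral_eq_Suc)
  also have "\<dots> \<longleftrightarrow> c = 0 \<and> c = a \<and> c = b \<and> b = a \<and> a = 0 \<and> b = 0"
    by (simp only: cone_coord_eq_0_iff[OF x abc])
  also have "\<dots> \<longleftrightarrow> (a, b, c) = (0, 0, 0)" by auto
  finally show ?thesis by (simp add: abc)
qed

lemma cone_units_eq:
  "{x \<in> cone. \<forall>i<6. x!i \<noteq> 0} = {x \<in> cone. square_triple x \<in> distinct_triples}"
  using cone_units_iff by blast

lemma cone_nonzero_diff_units_eq:
  "{x \<in> cone. x \<noteq> replicate 6 0} - {x \<in> cone. \<forall>i<6. x!i \<noteq> 0} =
   {x \<in> cone. square_triple x \<in> degenerate_triples}"
proof -
  have "r \<in> degenerate_triples \<longleftrightarrow> r \<noteq> (0, 0, 0) \<and> r \<notin> distinct_triples"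
    if "r \<in> residue_triples" for r
    using that by (auto simp: degenerate_triples_def distinct_triples_def)
  then show ?thesis using cone_units_iff cone_zero_iff square_triple_in_residue_triples by blast
qed

section \<open>Projective points\<close>

definition scale :: "int \<Rightarrow> int list \<Rightarrow> int list" where
  "scale c x = map (\<lambda>a. (c * a) mod p) x"

lemma proj_pt_eq_image: "proj_pt p x = (\<lambda>c. scale c x) ` {1..<p}"
  by (auto simp: proj_pt_def scale_def)

lemma scale_scale: "scale c (scale d x) = scale ((c * d) mod p) x"
  by (simp add: scale_def mod_mult_right_eq mod_mult_left_eq mult.assoc)

lemma scale_mod: "scale (c mod p) x = scale c x"
  by (simp add: scale_def mod_mult_left_eq)

lemma mem_proj_pt_self: "set x \<subseteq> {0..<p} \<Longrightarrow> x \<in> proj_pt p x"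
  using p_gt_2 by (force simp: proj_pt_eq_image scale_def intro: map_idI[symmetric])

lemma proj_pt_eq:
  assumes "y \<in> proj_pt p x"
  shows "proj_pt p y = proj_pt p x"
proof -
  obtain c where c: "c \<in> {1..<p}" and y: "y = scale c x"
    using assms by (auto simp: proj_pt_eq_image)
  then have "\<not> p dvd c" using residue_dvd_iff[of c] by auto
  then obtain c' where c': "c' \<in> {1..<p}" "[c' * c = 1] (mod p)" using inverse_exists by blast
  have unit: "(d * e) mod p \<in> {1..<p}" if "d \<in> {1..<p}" "e \<in> {1..<p}" for d e
    using that residue_dvd_iff by (intro mod_in_units) (auto simp: dvd_mult_iff)
  have inv: "scale ((d * c') mod p) y = scale d x" for d
  proof -
    have "[d * c' * c = d] (mod p)"
      using cong_scalar_left[OF c'(2), of d] by (simp add: mult.assoc)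
    then show ?thesis by (simp add: y scale_scale scale_mod cong_def mod_mult_left_eq)
  qed
  have "proj_pt p x \<subseteq> proj_pt p y"
  proof
    fix z assume "z \<in> proj_pt p x"
    then obtain d where d: "d \<in> {1..<p}" "z = scale d x" by (auto simp: proj_pt_eq_image)
    then have "z = scale ((d * c') mod p) y" using inv by simp
    then show "z \<in> proj_pt p y" using unit[OF d(1) c'(1)] by (auto simp: proj_pt_eq_image)
  qed
  moreover have "proj_pt p y \<subseteq> proj_pt p x"
    using unit[OF _ c] by (auto simp: proj_pt_eq_image y scale_scale)
  ultimately show ?thesis by blast
qed

lemma card_proj_pt:
  assumes "set x \<subseteq> {0..<p}" "\<exists>a\<in>set x. a \<noteq> 0"
  shows "int (card (proj_pt p x)) = p - 1"
proof -
  obtain i where i: "i < length x" "x!i \<noteq> 0" using assms(2) by (auto simp: in_set_conv_nth)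
  then have "\<not> p dvd x!i" using assms(1) residue_dvd_iff by (meson nth_mem subsetD)
  have "inj_on (\<lambda>c. scale c x) {1..<p}"
  proof (rule inj_onI)
    fix c d assume cd: "c \<in> {1..<p}" "d \<in> {1..<p}" "scale c x = scale d x"
    then have "[c * x!i = d * x!i] (mod p)" using i(1) by (metis cong_def nth_map scale_def)
    then have "p dvd (c - d) * x!i" by (simp add: cong_iff_dvd_diff left_diff_distrib)
    then have "p dvd c - d" using \<open>\<not> p dvd x!i\<close> by (simp add: dvd_mult_iff)
    then show "c = d" using cd(1,2) by (simp add: residue_dvd_diff_iff)
  qed
  then show ?thesis using p_gt_2 by (simp add: proj_pt_eq_image card_image)
qed

lemma card_eq_card_proj_pt_image:
  assumes "finite X"
    and "\<And>x. x \<in> X \<Longrightarrow> set x \<subseteq> {0..<p} \<and> (\<exists>a\<in>set x. a \<noteq> 0)"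
    and "\<And>x c. x \<in> X \<Longrightarrow> c \<in> {1..<p} \<Longrightarrow> scale c x \<in> X"
  shows "int (card X) = (p - 1) * int (card (proj_pt p ` X))"
proof -
  have fibre: "{x \<in> X. proj_pt p x = proj_pt p y} = proj_pt p y" if "y \<in> X" for y
  proof -
    have "proj_pt p y \<subseteq> X" using assms(3) that by (auto simp: proj_pt_eq_image)
    moreover have "x \<in> proj_pt p x" if "x \<in> X" for x
      using assms(2) that by (simp add: mem_proj_pt_self)
    ultimately show ?thesis using proj_pt_eq by blast
  qed
  have "card X = (\<Sum>P\<in>proj_pt p ` X. card {x \<in> X. proj_pt p x = P})"
    by (rule card_eq_sum_card_fibres) (use assms(1) in auto)
  then have "int (card X) = (\<Sum>P\<in>proj_pt p ` X. int (card {x \<in> X. proj_pt p x = P}))" by simp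
  also have "\<dots> = (\<Sum>P\<in>proj_pt p ` X. p - 1)"
    using fibre assms(2) card_proj_pt by (intro sum.cong) auto
  finally show ?thesis by simp
qed

lemma cong_diff_squares_scale:
  assumes "[u^2 - v^2 = w^2] (mod p)"
  shows "[((c * u) mod p)^2 - ((c * v) mod p)^2 = ((c * w) mod p)^2] (mod p)"
proof -
  have sq: "[((c * a) mod p)^2 = c^2 * a^2] (mod p)" for a
    by (simp add: cong_def power_mod power_mult_distrib)
  have "[((c * u) mod p)^2 - ((c * v) mod p)^2 = c^2 * u^2 - c^2 * v^2] (mod p)"
    by (intro cong_diff sq)
  also have "c^2 * u^2 - c^2 * v^2 = c^2 * (u^2 - v^2)" by (simp add: algebra_simps)
  also have "[c^2 * (u^2 - v^2) = c^2 * w^2] (mod p)" using assms by (rule cong_scalar_left)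
  also have "[c^2 * w^2 = ((c * w) mod p)^2] (mod p)" by (rule cong_sym[OF sq])
  finally show ?thesis .
qed

lemma scale_mem_cone: "x \<in> cone \<Longrightarrow> scale c x \<in> cone"
  using mod_in_residues
  by (auto simp: cone_def Fp_vecs_def scale_def on_S_def cong_diff_squares_scale)

lemma scale_eq_0_iff: "c \<in> {1..<p} \<Longrightarrow> a \<in> {0..<p} \<Longrightarrow> (c * a) mod p = 0 \<longleftrightarrow> a = 0"
  using residue_dvd_iff[of c] residue_dvd_iff[of a]
  by (auto simp: dvd_eq_mod_eq_0[symmetric] dvd_mult_iff)

lemma card_cone_nonzero:
  "int (card {x \<in> cone. x \<noteq> replicate 6 0}) = (p - 1) * int (card (S_pts p))"
proof -
  have nonzero_iff: "x \<noteq> replicate 6 0 \<longleftrightarrow> (\<exists>a\<in>set x. a \<noteq> 0)" if "x \<in> cone" for x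
    using that by (auto simp: cone_def Fp_vecs_def intro: replicate_eqI)
  have "S_pts p = proj_pt p ` {x \<in> cone. x \<noteq> replicate 6 0}"
    by (auto simp: S_pts_def cone_def)
  moreover have "int (card {x \<in> cone. x \<noteq> replicate 6 0}) =
                 (p - 1) * int (card (proj_pt p ` {x \<in> cone. x \<noteq> replicate 6 0}))"
  proof (rule card_eq_card_proj_pt_image)
    show "finite {x \<in> cone. x \<noteq> replicate 6 0}" using finite_cone by simp
  next
    fix x assume "x \<in> {x \<in> cone. x \<noteq> replicate 6 0}"
    then show "set x \<subseteq> {0..<p} \<and> (\<exists>a\<in>set x. a \<noteq> 0)"
      using nonzero_iff by (auto simp: cone_def Fp_vecs_def)
  next
    fix x c assume x: "x \<in> {x \<in> cone. x \<noteq> replicate 6 0}" and c: "c \<in> {1..<p}"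
    then obtain a where "a \<in> set x" "a \<noteq> 0" using nonzero_iff by auto
    moreover have "a \<in> {0..<p}" using x \<open>a \<in> set x\<close> by (auto simp: cone_def Fp_vecs_def)
    ultimately have "\<exists>b\<in>set (scale c x). b \<noteq> 0"
      using scale_eq_0_iff[OF c] by (auto simp: scale_def)
    then show "scale c x \<in> {x \<in> cone. x \<noteq> replicate 6 0}"
      using x scale_mem_cone nonzero_iff by blast
  qed
  ultimately show ?thesis by simp
qed

lemma card_cone_units:
  "int (card {x \<in> cone. \<forall>i<6. x!i \<noteq> 0}) = (p - 1) * int (card (S0_pts p))"
proof -
  have "S0_pts p = proj_pt p ` {x \<in> cone. \<forall>i<6. x!i \<noteq> 0}"
    by (auto simp: S0_pts_def cone_def)
  moreover have "int (card {x \<in> cone. \<forall>i<6. x!i \<noteq> 0}) =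
                 (p - 1) * int (card (proj_pt p ` {x \<in> cone. \<forall>i<6. x!i \<noteq> 0}))"
  proof (rule card_eq_card_proj_pt_image)
    show "finite {x \<in> cone. \<forall>i<6. x!i \<noteq> 0}" using finite_cone by simp
  next
    fix x assume "x \<in> {x \<in> cone. \<forall>i<6. x!i \<noteq> 0}"
    then show "set x \<subseteq> {0..<p} \<and> (\<exists>a\<in>set x. a \<noteq> 0)"
      by (auto simp: cone_def Fp_vecs_def intro!: bexI[of _ "x!0"])
  next
    fix x c assume x: "x \<in> {x \<in> cone. \<forall>i<6. x!i \<noteq> 0}" and c: "c \<in> {1..<p}"
    have "(c * x!i) mod p \<noteq> 0" if "i < 6" for i
    proof -
      have x6: "set x \<subseteq> {0..<p}" "length x = 6" using x by (auto simp: cone_def Fp_vecs_def)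
      have "x!i \<in> {0..<p}" by (intro subsetD[OF x6(1)] nth_mem) (simp add: x6(2) that)
      then show ?thesis using scale_eq_0_iff[OF c] x that by simp
    qed
    then show "scale c x \<in> {x \<in> cone. \<forall>i<6. x!i \<noteq> 0}"
      using x scale_mem_cone by (auto simp: scale_def cone_def Fp_vecs_def)
  qed
  ultimately show ?thesis by simp
qed

section \<open>Translation classes of K4-sets\<close>

definition shift :: "int set \<Rightarrow> int \<Rightarrow> int set" where
  "shift A t = (\<lambda>a. (a + t) mod p) ` A"

lemma transl_class_eq_image: "transl_class p A = shift A ` {0..<p}"
  by (auto simp: transl_class_def shift_def)

lemma shift_shift: "shift (shift A s) t = shift A ((s + t) mod p)"
  by (simp add: shift_def image_image mod_simps add.assoc)

lemma shift_0: "A \<subseteq> {0..<p} \<Longrightarrow> shift A 0 = A"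
  by (force simp: shift_def)

lemma shift_subset: "shift A t \<subseteq> {0..<p}"
  using mod_in_residues by (auto simp: shift_def)

lemma inj_on_shift:
  assumes "A \<subseteq> {0..<p}"
  shows "inj_on (\<lambda>a. (a + t) mod p) A"
proof (rule inj_onI)
  fix a b assume ab: "a \<in> A" "b \<in> A" "(a + t) mod p = (b + t) mod p"
  then have "p dvd a - b" by (simp add: mod_eq_dvd_iff)
  moreover have "a \<in> {0..<p}" "b \<in> {0..<p}" using ab(1,2) assms by auto
  ultimately show "a = b" by (simp add: residue_dvd_diff_iff)
qed

lemma card_shift: "A \<subseteq> {0..<p} \<Longrightarrow> card (shift A t) = card A"
  by (simp add: shift_def card_image inj_on_shift)

lemma shift_inj:
  assumes "B \<subseteq> {0..<p}" "\<not> p dvd int (card B)" "s \<in> {0..<p}" "t \<in> {0..<p}"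
    and "shift B s = shift B t"
  shows "s = t"
proof -
  have sum_shift: "[\<Sum>(shift B u) = \<Sum>B + int (card B) * u] (mod p)" for u
  proof -
    have "\<Sum>(shift B u) = (\<Sum>a\<in>B. (a + u) mod p)"
      unfolding shift_def using assms(1) by (simp add: sum.reindex inj_on_shift)
    also have "[\<dots> = (\<Sum>a\<in>B. a + u)] (mod p)" by (simp add: cong_def mod_sum_eq)
    also have "(\<Sum>a\<in>B. a + u) = \<Sum>B + int (card B) * u" by (simp add: sum.distrib)
    finally show ?thesis .
  qed
  have "[\<Sum>B + int (card B) * s = \<Sum>B + int (card B) * t] (mod p)"
    using sum_shift[of s] sum_shift[of t] assms(5) by (metis cong_sym cong_trans)
  then have "p dvd int (card B) * (s - t)" by (simp add: cong_iff_dvd_diff algebra_simps)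
  then show "s = t" using assms(2-4) by (simp add: dvd_mult_iff residue_dvd_diff_iff)
qed

lemma mem_transl_class_self: "A \<subseteq> {0..<p} \<Longrightarrow> A \<in> transl_class p A"
  unfolding transl_class_eq_image using p_gt_2
  by (intro image_eqI[of _ _ 0]) (simp_all add: shift_0)

lemma transl_class_eq_of_mem:
  assumes "B \<subseteq> {0..<p}" "A \<in> transl_class p B"
  shows "transl_class p A = transl_class p B"
proof -
  obtain s where s: "s \<in> {0..<p}" "A = shift B s"
    using assms(2) by (auto simp: transl_class_eq_image)
  have "shift A t \<in> transl_class p B" for t
    using mod_in_residues by (simp add: transl_class_eq_image s shift_shift)
  moreover have "shift B u = shift A ((u - s) mod p)" if "u \<in> {0..<p}" for u
    using that by (simp add: s shift_shift mod_simps)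
  ultimately show ?thesis using mod_in_residues by (auto simp: transl_class_eq_image)
qed

lemma card_transl_class_containing_0:
  assumes "B \<subseteq> {0..<p}" "\<not> p dvd int (card B)"
  shows "card {A \<in> transl_class p B. 0 \<in> A} = card B"
proof -
  let ?f = "\<lambda>a. shift B ((- a) mod p)"
  have "{A \<in> transl_class p B. 0 \<in> A} = ?f ` B"
  proof (rule equalityI; rule subsetI)
    fix A assume "A \<in> {A \<in> transl_class p B. 0 \<in> A}"
    then obtain t a where t: "t \<in> {0..<p}" "A = shift B t" and a: "a \<in> B" "(a + t) mod p = 0"
      by (auto simp: transl_class_eq_image shift_def)
    then have "[t = - a] (mod p)" by (simp add: cong_iff_dvd_diff dvd_eq_mod_eq_0 add.commute)
    then have "t = (- a) mod p" using t(1) by (simp add: cong_def)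
    then show "A \<in> ?f ` B" using t a by blast
  next
    fix A assume "A \<in> ?f ` B"
    then obtain a where a: "a \<in> B" "A = ?f a" by blast
    have "(a + (- a) mod p) mod p = 0" by (simp add: mod_simps)
    then show "A \<in> {A \<in> transl_class p B. 0 \<in> A}"
      using a mod_in_residues by (force simp: transl_class_eq_image shift_def)
  qed
  moreover have "inj_on ?f B"
  proof (rule inj_onI)
    fix a b assume ab: "a \<in> B" "b \<in> B" "?f a = ?f b"
    then have "(- a) mod p = (- b) mod p" using assms mod_in_residues by (intro shift_inj) auto
    then have "p dvd b - a" by (simp add: mod_eq_dvd_iff)
    moreover have "a \<in> {0..<p}" "b \<in> {0..<p}" using ab(1,2) assms(1) by auto
    ultimately show "a = b" by (simp add: residue_dvd_diff_iff)
  qed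
  ultimately show ?thesis by (simp add: card_image)
qed

lemma QuadRes_cong: "[d = e] (mod p) \<Longrightarrow> QuadRes p d \<longleftrightarrow> QuadRes p e"
  unfolding QuadRes_def by (meson cong_sym cong_trans)

lemma finite_K4_sets: "finite (K4_sets p)"
  by (rule finite_subset[of _ "Pow {0..<p}"]) (auto simp: K4_sets_def)

lemma shift_mem_K4_sets:
  assumes "A \<in> K4_sets p"
  shows "shift A t \<in> K4_sets p"
proof -
  have A: "A \<subseteq> {0..<p}" "card A = 4" "\<forall>a\<in>A. \<forall>b\<in>A. a \<noteq> b \<longrightarrow> QuadRes p (a - b)"
    using assms by (auto simp: K4_sets_def)
  have "QuadRes p (u - v)" if uv: "u \<in> shift A t" "v \<in> shift A t" "u \<noteq> v" for u v
  proof -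
    obtain a b where ab: "a \<in> A" "b \<in> A" "u = (a + t) mod p" "v = (b + t) mod p"
      using uv(1,2) by (auto simp: shift_def)
    then have "a \<noteq> b" using uv(3) by auto
    have "[u - v = a - b] (mod p)" by (simp add: ab cong_def mod_diff_eq)
    then show ?thesis using A(3) ab(1,2) \<open>a \<noteq> b\<close> QuadRes_cong by blast
  qed
  moreover have "shift A t \<subseteq> {0..<p}" "card (shift A t) = 4"
    using A(1,2) shift_subset card_shift by simp_all
  ultimately show ?thesis unfolding K4_sets_def by blast
qed

lemma card_K4_sets_containing_0: "card {A \<in> K4_sets p. 0 \<in> A} = 4 * n_K4 p"
proof -
  have "\<not> p dvd 4" using dvd_2_mult_iff[of 2] not_dvd_2 by simp
  have fibre_card: "card {A \<in> {A \<in> K4_sets p. 0 \<in> A}. transl_class p A = transl_class p B} = 4"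
    if B: "B \<in> K4_sets p" for B
  proof -
    have B_sub: "B \<subseteq> {0..<p}" and "card B = 4" using B by (simp_all add: K4_sets_def)
    have "{A \<in> {A \<in> K4_sets p. 0 \<in> A}. transl_class p A = transl_class p B} =
          {A \<in> transl_class p B. 0 \<in> A}"
    proof (rule equalityI; rule subsetI)
      fix A assume A: "A \<in> {A \<in> {A \<in> K4_sets p. 0 \<in> A}. transl_class p A = transl_class p B}"
      then have "A \<in> transl_class p A" by (intro mem_transl_class_self) (simp add: K4_sets_def)
      then show "A \<in> {A \<in> transl_class p B. 0 \<in> A}" using A by simp
    next
      fix A assume A: "A \<in> {A \<in> transl_class p B. 0 \<in> A}"
      then have "A \<in> K4_sets p" using B shift_mem_K4_sets by (auto simp: transl_class_eq_image)
      then show "A \<in> {A \<in> {A \<in> K4_sets p. 0 \<in> A}. transl_class p A = transl_class p B}"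
        using A transl_class_eq_of_mem[OF B_sub] by simp
    qed
    then show ?thesis
      using card_transl_class_containing_0[OF B_sub] \<open>card B = 4\<close> \<open>\<not> p dvd 4\<close> by simp
  qed
  have "card {A \<in> K4_sets p. 0 \<in> A} =
        (\<Sum>C\<in>transl_class p ` K4_sets p. card {A \<in> {A \<in> K4_sets p. 0 \<in> A}. transl_class p A = C})"
    by (rule card_eq_sum_card_fibres) (use finite_K4_sets in auto)
  also have "\<dots> = (\<Sum>C\<in>transl_class p ` K4_sets p. 4)"
    using fibre_card by (intro sum.cong) auto
  also have "\<dots> = 4 * n_K4 p" by (simp add: n_K4_def setcompr_eq_image)
  finally show ?thesis .
qed

definition K4_triples :: "(int \<times> int \<times> int) set" where
  "K4_triples = {(a, b, c). {0, a, b, c} \<in> K4_sets p}"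

lemma K4_triples_subset: "K4_triples \<subseteq> distinct_triples"
proof
  fix r assume "r \<in> K4_triples"
  then obtain a b c where r: "r = (a, b, c)" and K4: "{0, a, b, c} \<in> K4_sets p"
    by (auto simp: K4_triples_def)
  have "card (set [0, a, b, c]) = length [0, a, b, c]" using K4 by (simp add: K4_sets_def)
  then have "distinct [0, a, b, c]" by (rule card_distinct)
  then show "r \<in> distinct_triples" using K4 by (auto simp: r K4_sets_def distinct_triples_def)
qed

lemma card_K4_triples: "card K4_triples = 6 * card {A \<in> K4_sets p. 0 \<in> A}"
proof -
  let ?g = "\<lambda>(a, b, c). {0, a, b, c} :: int set"
  have fibre: "card {r \<in> K4_triples. ?g r = A} = 6" if A: "A \<in> {A \<in> K4_sets p. 0 \<in> A}" for A
  proof -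
    have "card A = 4" "0 \<in> A" "finite A" using A by (auto simp: K4_sets_def intro: finite_subset)
    then have "card (A - {0}) = 3" by simp
    then obtain x y z where xyz: "A - {0} = {x, y, z}" "x \<noteq> y" "y \<noteq> z" "x \<noteq> z"
      by (auto simp: card_3_iff)
    have A_eq: "A = {0, x, y, z}" using xyz(1) \<open>0 \<in> A\<close> by auto
    have "{r \<in> K4_triples. ?g r = A} =
          {(x, y, z), (x, z, y), (y, x, z), (y, z, x), (z, x, y), (z, y, x)}"
    proof (rule equalityI; rule subsetI)
      fix r assume r: "r \<in> {r \<in> K4_triples. ?g r = A}"
      then obtain a b c where abc: "r = (a, b, c)" "{0, a, b, c} = A"
        by (auto simp: K4_triples_def)
      then have "distinct [0, a, b, c]"
        using r K4_triples_subset by (auto simp: distinct_triples_def)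
      then have "a \<in> {x, y, z}" "b \<in> {x, y, z}" "c \<in> {x, y, z}" using abc(2) xyz(1) by auto
      then show "r \<in> {(x, y, z), (x, z, y), (y, x, z), (y, z, x), (z, x, y), (z, y, x)}"
        using \<open>distinct [0, a, b, c]\<close> by (auto simp: abc(1))
    next
      fix r assume "r \<in> {(x, y, z), (x, z, y), (y, x, z), (y, z, x), (z, x, y), (z, y, x)}"
      then show "r \<in> {r \<in> K4_triples. ?g r = A}"
        using A by (auto simp: A_eq K4_triples_def insert_commute)
    qed
    then show ?thesis using xyz(2-4) by simp
  qed
  have "finite K4_triples" using K4_triples_subset finite_distinct_triples by (rule finite_subset)
  then have "card K4_triples = (\<Sum>A\<in>{A \<in> K4_sets p. 0 \<in> A}. card {r \<in> K4_triples. ?g r = A})"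
    by (rule card_eq_sum_card_fibres) (use finite_K4_sets in \<open>auto simp: K4_triples_def\<close>)
  also have "\<dots> = 6 * card {A \<in> K4_sets p. 0 \<in> A}" using fibre by simp
  finally show ?thesis .
qed

end

section \<open>Evaluation of the fibre sums\<close>

locale prime_1_mod_4 = odd_prime +
  assumes p_mod_4: "p mod 4 = 1"
begin

lemma QuadRes_minus_1: "QuadRes p (-1)"
proof -
  have p_eq: "int (nat p) = p" and "2 < nat p" using p_gt_2 by simp_all
  then have prime_nat: "prime (nat p)" using prime by (metis prime_nat_iff_prime)
  have "(nat p - 1) div 2 = nat ((p - 1) div 2)"
    using p_gt_2 by (simp add: nat_div_distrib nat_diff_distrib)
  moreover have "(p - 1) div 2 = 2 * (p div 4)" using p_mod_4 by presburger
  ultimately have "even ((nat p - 1) div 2)" using p_gt_2 by (simp add: even_nat_iff)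
  then have "[Legendre (-1) p = 1] (mod p)"
    using euler_criterion[OF prime_nat \<open>2 < nat p\<close>, of "-1"] p_eq by simp
  moreover have "\<not> [-1 = 1] (mod p)" "\<not> [-1 = 0] (mod p)"
    using p_gt_2 not_dvd_2 by (simp_all add: cong_iff_dvd_diff cong_0_iff)
  ultimately show ?thesis by (auto simp: Legendre_def split: if_splits)
qed

lemma QuadRes_minus_iff: "QuadRes p (-d) \<longleftrightarrow> QuadRes p d"
proof -
  have "QuadRes p (-d)" if "QuadRes p d" for d
  proof -
    obtain y where y: "[y^2 = d] (mod p)" using \<open>QuadRes p d\<close> by (auto simp: QuadRes_def)
    obtain i where i: "[i^2 = -1] (mod p)" using QuadRes_minus_1 by (auto simp: QuadRes_def)
    have "[(i * y)^2 = -1 * d] (mod p)"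
      using cong_mult[OF i y] by (simp add: power_mult_distrib)
    then show ?thesis by (auto simp: QuadRes_def)
  qed
  from this[of d] this[of "-d"] show ?thesis by auto
qed

lemma nsqrt_minus: "nsqrt (-d) = nsqrt d"
  by (simp add: nsqrt_eq QuadRes_minus_iff)

lemma nsqrt_diff_commute: "nsqrt (a - b) = nsqrt (b - a)"
  using nsqrt_minus[of "b - a"] by simp

lemma sum_nsqrt_mult_shift_units:
  assumes a: "a \<in> {1..<p}"
  shows "(\<Sum>b\<in>{1..<p} - {a}. nsqrt b * nsqrt (b - a)) = p - 1 - 2 * nsqrt a"
proof -
  have "\<not> p dvd a" using a residue_dvd_iff[of a] by auto
  have "{0..<p} = insert 0 {1..<p}" using p_gt_2 by auto
  then have "(\<Sum>b\<in>{0..<p}. nsqrt b * nsqrt (b - a)) =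
      nsqrt 0 * nsqrt (0 - a) + (\<Sum>b\<in>{1..<p}. nsqrt b * nsqrt (b - a))"
    by simp
  also have "(\<Sum>b\<in>{1..<p}. nsqrt b * nsqrt (b - a)) =
      nsqrt a * nsqrt (a - a) + (\<Sum>b\<in>{1..<p} - {a}. nsqrt b * nsqrt (b - a))"
    using a by (simp add: sum.remove)
  finally show ?thesis
    using sum_nsqrt_mult_shift[OF \<open>\<not> p dvd a\<close>] nsqrt_dvd[of 0] nsqrt_dvd[of "a - a"]
      nsqrt_minus[of a]
    by simp
qed

abbreviation unit_pairs :: "(int \<times> int) set" where
  "unit_pairs \<equiv> SIGMA x:{1..<p}. {1..<p} - {x}"

lemma sum_nsqrt_triangle:
  "(\<Sum>(x, y)\<in>unit_pairs. nsqrt x * nsqrt y * nsqrt (y - x)) = (p - 1) * (p - 5)"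
proof -
  have "(\<Sum>(x, y)\<in>unit_pairs. nsqrt x * nsqrt y * nsqrt (y - x)) =
        (\<Sum>x\<in>{1..<p}. nsqrt x * (\<Sum>y\<in>{1..<p} - {x}. nsqrt y * nsqrt (y - x)))"
    by (simp add: sum.Sigma[symmetric] sum_distrib_left mult.assoc)
  also have "\<dots> = (\<Sum>x\<in>{1..<p}. (p - 5) * nsqrt x)"
  proof (rule sum.cong[OF refl])
    fix x assume x: "x \<in> {1..<p}"
    then have "nsqrt x = 0 \<or> nsqrt x = 2" using residue_dvd_iff[of x] nsqrt_not_dvd_cases by auto
    then show "nsqrt x * (\<Sum>y\<in>{1..<p} - {x}. nsqrt y * nsqrt (y - x)) = (p - 5) * nsqrt x"
      unfolding sum_nsqrt_mult_shift_units[OF x] by auto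
  qed
  also have "\<dots> = (p - 5) * (p - 1)" by (simp add: sum_distrib_left[symmetric] sum_nsqrt_units)
  finally show ?thesis by simp
qed

lemma QuadRes_diff_commute: "QuadRes p (a - b) \<longleftrightarrow> QuadRes p (b - a)"
  using QuadRes_minus_iff[of "b - a"] by simp

lemma weight_distinct:
  assumes "r \<in> distinct_triples"
  shows "weight r = (if r \<in> K4_triples then 64 else 0)"
proof -
  obtain a b c where r: "r = (a, b, c)" and abc: "a \<in> {0..<p}" "b \<in> {0..<p}" "c \<in> {0..<p}"
    and d: "distinct [0, a, b, c]"
    using assms by (auto simp: distinct_triples_def)
  then have "\<not> p dvd a" "\<not> p dvd b" "\<not> p dvd c" "\<not> p dvd b - a" "\<not> p dvd c - a" "\<not> p dvd c - b"
    by (auto simp: residue_dvd_iff residue_dvd_diff_iff)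
  then have "weight r = (if QuadRes p a \<and> QuadRes p b \<and> QuadRes p c \<and>
                             QuadRes p (b - a) \<and> QuadRes p (c - a) \<and> QuadRes p (c - b)
                          then 64 else 0)"
    by (simp add: r weight_def nsqrt_eq)
  moreover have "{0, a, b, c} \<in> K4_sets p \<longleftrightarrow> QuadRes p a \<and> QuadRes p b \<and> QuadRes p c \<and>
                             QuadRes p (b - a) \<and> QuadRes p (c - a) \<and> QuadRes p (c - b)"
    using abc d p_gt_2
    by (auto simp: K4_sets_def QuadRes_minus_iff QuadRes_diff_commute[of a b]
                   QuadRes_diff_commute[of a c] QuadRes_diff_commute[of b c])
  ultimately show ?thesis by (simp add: r K4_triples_def)
qed

lemma sum_weight_distinct: "(\<Sum>r\<in>distinct_triples. weight r) = 64 * int (card K4_triples)"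
  using finite_distinct_triples K4_triples_subset
  by (simp add: weight_distinct sum.If_cases Int_absorb1)

lemma weight_pair_families:
  assumes "(x, y) \<in> unit_pairs"
  shows "weight (0, x, y) = 4 * (nsqrt x * nsqrt y * nsqrt (y - x))"
    "weight (x, 0, y) = 4 * (nsqrt x * nsqrt y * nsqrt (y - x))"
    "weight (x, y, 0) = 4 * (nsqrt x * nsqrt y * nsqrt (y - x))"
    "weight (x, x, y) = 4 * (nsqrt x * nsqrt y * nsqrt (y - x))"
    "weight (x, y, x) = 4 * (nsqrt x * nsqrt y * nsqrt (y - x))"
    "weight (x, y, y) = 4 * (nsqrt x * nsqrt y * nsqrt (y - x))"
  using assms nsqrt_not_dvd_cases[of x] nsqrt_not_dvd_cases[of y] nsqrt_not_dvd_cases[of "y - x"]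
  by (auto simp: weight_def nsqrt_dvd nsqrt_minus nsqrt_diff_commute[of x y]
      residue_dvd_iff residue_dvd_diff_iff)

lemma weight_unit_families:
  assumes "x \<in> {1..<p}"
  shows "weight (0, x, x) = 8 * nsqrt x" "weight (x, 0, x) = 8 * nsqrt x"
    "weight (x, x, 0) = 8 * nsqrt x" "weight (0, 0, x) = 4 * nsqrt x"
    "weight (0, x, 0) = 4 * nsqrt x" "weight (x, 0, 0) = 4 * nsqrt x"
    "weight (x, x, x) = 4 * nsqrt x"
  using assms nsqrt_not_dvd_cases[of x] residue_dvd_iff[of x]
  by (auto simp: weight_def nsqrt_dvd nsqrt_minus)

abbreviation weight_sum :: "(int \<times> int \<times> int \<Rightarrow> bool) \<Rightarrow> int" where
  "weight_sum P \<equiv> \<Sum>r\<in>residue_triples. if P r then weight r else 0"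

lemma sum_pair_family:
  assumes "bij_betw e unit_pairs {r \<in> residue_triples. P r}"
    and "\<And>x y. (x, y) \<in> unit_pairs \<Longrightarrow> weight (e (x, y)) = 4 * (nsqrt x * nsqrt y * nsqrt (y - x))"
  shows "weight_sum P = 4 * ((p - 1) * (p - 5))"
proof -
  have "weight_sum P = (\<Sum>z\<in>unit_pairs. weight (e z))"
    by (rule sum_if_bij_betw[OF _ assms(1)]) simp
  also have "\<dots> = (\<Sum>(x, y)\<in>unit_pairs. 4 * (nsqrt x * nsqrt y * nsqrt (y - x)))"
  proof (rule sum.cong[OF refl])
    fix z assume z: "z \<in> unit_pairs"
    then obtain x y where "z = (x, y)" by (cases z)
    then show "weight (e z) = (case z of (x, y) \<Rightarrow> 4 * (nsqrt x * nsqrt y * nsqrt (y - x)))"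
      using assms(2) z by simp
  qed
  also have "\<dots> = 4 * ((p - 1) * (p - 5))"
    using sum_nsqrt_triangle by (simp add: sum_distrib_left[symmetric] case_prod_unfold)
  finally show ?thesis .
qed

lemma sum_unit_family:
  assumes "bij_betw e {1..<p} {r \<in> residue_triples. P r}"
    and "\<And>x. x \<in> {1..<p} \<Longrightarrow> weight (e x) = k * nsqrt x"
  shows "weight_sum P = k * (p - 1)"
proof -
  have "weight_sum P = (\<Sum>x\<in>{1..<p}. weight (e x))"
    by (rule sum_if_bij_betw[OF _ assms(1)]) simp
  also have "\<dots> = (\<Sum>x\<in>{1..<p}. k * nsqrt x)" using assms(2) by (rule sum.cong[OF refl])
  also have "\<dots> = k * (p - 1)" by (simp add: sum_distrib_left[symmetric] sum_nsqrt_units)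
  finally show ?thesis .
qed

(* The 13 set partitions of the four points 0, a, b, c other than the finest and the coarsest. *)
lemma degenerate_indicator_split:
  fixes w :: int
  shows "(if (\<lambda>(a, b, c). \<not> distinct [0, a, b, c] \<and> (a, b, c) \<noteq> (0, 0, 0)) r then w else 0) =
   (if (\<lambda>(a, b, c). a = 0 \<and> b \<noteq> 0 \<and> c \<noteq> 0 \<and> b \<noteq> c) r then w else 0) +
   (if (\<lambda>(a, b, c). b = 0 \<and> a \<noteq> 0 \<and> c \<noteq> 0 \<and> a \<noteq> c) r then w else 0) +
   (if (\<lambda>(a, b, c). c = 0 \<and> a \<noteq> 0 \<and> b \<noteq> 0 \<and> a \<noteq> b) r then w else 0) +
   (if (\<lambda>(a, b, c). a = b \<and> a \<noteq> 0 \<and> c \<noteq> 0 \<and> a \<noteq> c) r then w else 0) +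
   (if (\<lambda>(a, b, c). a = c \<and> a \<noteq> 0 \<and> b \<noteq> 0 \<and> a \<noteq> b) r then w else 0) +
   (if (\<lambda>(a, b, c). b = c \<and> a \<noteq> 0 \<and> b \<noteq> 0 \<and> a \<noteq> b) r then w else 0) +
   (if (\<lambda>(a, b, c). a = 0 \<and> b = c \<and> b \<noteq> 0) r then w else 0) +
   (if (\<lambda>(a, b, c). b = 0 \<and> a = c \<and> a \<noteq> 0) r then w else 0) +
   (if (\<lambda>(a, b, c). c = 0 \<and> a = b \<and> a \<noteq> 0) r then w else 0) +
   (if (\<lambda>(a, b, c). a = 0 \<and> b = 0 \<and> c \<noteq> 0) r then w else 0) +
   (if (\<lambda>(a, b, c). a = 0 \<and> c = 0 \<and> b \<noteq> 0) r then w else 0) +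
   (if (\<lambda>(a, b, c). b = 0 \<and> c = 0 \<and> a \<noteq> 0) r then w else 0) +
   (if (\<lambda>(a, b, c). a = b \<and> b = c \<and> a \<noteq> 0) r then w else 0)"
proof -
  obtain a b c where r: "r = (a, b, c)" by (cases r) auto
  show ?thesis unfolding r
    by (cases "a = 0"; cases "b = 0"; cases "c = 0"; cases "a = b"; cases "a = c"; cases "b = c")
      auto
qed

lemma sum_weight_degenerate_split:
  "(\<Sum>r\<in>degenerate_triples. weight r) =
   weight_sum (\<lambda>(a, b, c). a = 0 \<and> b \<noteq> 0 \<and> c \<noteq> 0 \<and> b \<noteq> c) +
   weight_sum (\<lambda>(a, b, c). b = 0 \<and> a \<noteq> 0 \<and> c \<noteq> 0 \<and> a \<noteq> c) +
   weight_sum (\<lambda>(a, b, c). c = 0 \<and> a \<noteq> 0 \<and> b \<noteq> 0 \<and> a \<noteq> b) +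
   weight_sum (\<lambda>(a, b, c). a = b \<and> a \<noteq> 0 \<and> c \<noteq> 0 \<and> a \<noteq> c) +
   weight_sum (\<lambda>(a, b, c). a = c \<and> a \<noteq> 0 \<and> b \<noteq> 0 \<and> a \<noteq> b) +
   weight_sum (\<lambda>(a, b, c). b = c \<and> a \<noteq> 0 \<and> b \<noteq> 0 \<and> a \<noteq> b) +
   weight_sum (\<lambda>(a, b, c). a = 0 \<and> b = c \<and> b \<noteq> 0) +
   weight_sum (\<lambda>(a, b, c). b = 0 \<and> a = c \<and> a \<noteq> 0) +
   weight_sum (\<lambda>(a, b, c). c = 0 \<and> a = b \<and> a \<noteq> 0) +
   weight_sum (\<lambda>(a, b, c). a = 0 \<and> b = 0 \<and> c \<noteq> 0) +
   weight_sum (\<lambda>(a, b, c). a = 0 \<and> c = 0 \<and> b \<noteq> 0) +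
   weight_sum (\<lambda>(a, b, c). b = 0 \<and> c = 0 \<and> a \<noteq> 0) +
   weight_sum (\<lambda>(a, b, c). a = b \<and> b = c \<and> a \<noteq> 0)"
proof -
  have "degenerate_triples =
        {r \<in> residue_triples. (\<lambda>(a, b, c). \<not> distinct [0, a, b, c] \<and> (a, b, c) \<noteq> (0, 0, 0)) r}"
    by (auto simp: degenerate_triples_def)
  then have "(\<Sum>r\<in>degenerate_triples. weight r) =
        weight_sum (\<lambda>(a, b, c). \<not> distinct [0, a, b, c] \<and> (a, b, c) \<noteq> (0, 0, 0))"
    by (simp only: sum.inter_filter finite_SigmaI finite_atLeastLessThan_int)
  then show ?thesis by (simp only: degenerate_indicator_split sum.distrib)
qed

lemma sum_weight_degenerate: "(\<Sum>r\<in>degenerate_triples. weight r) = (p - 1) * (24 * p - 80)"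
proof -
  have fam_0xy: "weight_sum (\<lambda>(a, b, c). a = 0 \<and> b \<noteq> 0 \<and> c \<noteq> 0 \<and> b \<noteq> c) = 4 * ((p - 1) * (p - 5))"
    by (rule sum_pair_family[where e = "\<lambda>(x, y). (0, x, y)"],
        rule bij_betw_byWitness[where f' = "\<lambda>(a, b, c). (b, c)"]) (auto simp: weight_pair_families)
  have fam_x0y: "weight_sum (\<lambda>(a, b, c). b = 0 \<and> a \<noteq> 0 \<and> c \<noteq> 0 \<and> a \<noteq> c) = 4 * ((p - 1) * (p - 5))"
    by (rule sum_pair_family[where e = "\<lambda>(x, y). (x, 0, y)"],
        rule bij_betw_byWitness[where f' = "\<lambda>(a, b, c). (a, c)"]) (auto simp: weight_pair_families)
  have fam_xy0: "weight_sum (\<lambda>(a, b, c). c = 0 \<and> a \<noteq> 0 \<and> b \<noteq> 0 \<and> a \<noteq> b) = 4 * ((p - 1) * (p - 5))"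
    by (rule sum_pair_family[where e = "\<lambda>(x, y). (x, y, 0)"],
        rule bij_betw_byWitness[where f' = "\<lambda>(a, b, c). (a, b)"]) (auto simp: weight_pair_families)
  have fam_xxy: "weight_sum (\<lambda>(a, b, c). a = b \<and> a \<noteq> 0 \<and> c \<noteq> 0 \<and> a \<noteq> c) = 4 * ((p - 1) * (p - 5))"
    by (rule sum_pair_family[where e = "\<lambda>(x, y). (x, x, y)"],
        rule bij_betw_byWitness[where f' = "\<lambda>(a, b, c). (a, c)"]) (auto simp: weight_pair_families)
  have fam_xyx: "weight_sum (\<lambda>(a, b, c). a = c \<and> a \<noteq> 0 \<and> b \<noteq> 0 \<and> a \<noteq> b) = 4 * ((p - 1) * (p - 5))"
    by (rule sum_pair_family[where e = "\<lambda>(x, y). (x, y, x)"],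
        rule bij_betw_byWitness[where f' = "\<lambda>(a, b, c). (a, b)"]) (auto simp: weight_pair_families)
  have fam_xyy: "weight_sum (\<lambda>(a, b, c). b = c \<and> a \<noteq> 0 \<and> b \<noteq> 0 \<and> a \<noteq> b) = 4 * ((p - 1) * (p - 5))"
    by (rule sum_pair_family[where e = "\<lambda>(x, y). (x, y, y)"],
        rule bij_betw_byWitness[where f' = "\<lambda>(a, b, c). (a, b)"]) (auto simp: weight_pair_families)
  have fam_0xx: "weight_sum (\<lambda>(a, b, c). a = 0 \<and> b = c \<and> b \<noteq> 0) = 8 * (p - 1)"
    by (rule sum_unit_family[where e = "\<lambda>x. (0, x, x)"],
        rule bij_betw_byWitness[where f' = "\<lambda>(a, b, c). b"]) (auto simp: weight_unit_families)
  have fam_x0x: "weight_sum (\<lambda>(a, b, c). b = 0 \<and> a = c \<and> a \<noteq> 0) = 8 * (p - 1)"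
    by (rule sum_unit_family[where e = "\<lambda>x. (x, 0, x)"],
        rule bij_betw_byWitness[where f' = "\<lambda>(a, b, c). a"]) (auto simp: weight_unit_families)
  have fam_xx0: "weight_sum (\<lambda>(a, b, c). c = 0 \<and> a = b \<and> a \<noteq> 0) = 8 * (p - 1)"
    by (rule sum_unit_family[where e = "\<lambda>x. (x, x, 0)"],
        rule bij_betw_byWitness[where f' = "\<lambda>(a, b, c). a"]) (auto simp: weight_unit_families)
  have fam_00x: "weight_sum (\<lambda>(a, b, c). a = 0 \<and> b = 0 \<and> c \<noteq> 0) = 4 * (p - 1)"
    by (rule sum_unit_family[where e = "\<lambda>x. (0, 0, x)"],
        rule bij_betw_byWitness[where f' = "\<lambda>(a, b, c). c"]) (auto simp: weight_unit_families)
  have fam_0x0: "weight_sum (\<lambda>(a, b, c). a = 0 \<and> c = 0 \<and> b \<noteq> 0) = 4 * (p - 1)"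
    by (rule sum_unit_family[where e = "\<lambda>x. (0, x, 0)"],
        rule bij_betw_byWitness[where f' = "\<lambda>(a, b, c). b"]) (auto simp: weight_unit_families)
  have fam_x00: "weight_sum (\<lambda>(a, b, c). b = 0 \<and> c = 0 \<and> a \<noteq> 0) = 4 * (p - 1)"
    by (rule sum_unit_family[where e = "\<lambda>x. (x, 0, 0)"],
        rule bij_betw_byWitness[where f' = "\<lambda>(a, b, c). a"]) (auto simp: weight_unit_families)
  have fam_xxx: "weight_sum (\<lambda>(a, b, c). a = b \<and> b = c \<and> a \<noteq> 0) = 4 * (p - 1)"
    by (rule sum_unit_family[where e = "\<lambda>x. (x, x, x)"],
        rule bij_betw_byWitness[where f' = "\<lambda>(a, b, c). a"]) (auto simp: weight_unit_families)
  show ?thesis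
    unfolding sum_weight_degenerate_split fam_0xy fam_x0y fam_xy0 fam_xxy fam_xyx fam_xyy
      fam_0xx fam_x0x fam_xx0 fam_00x fam_0x0 fam_x00 fam_xxx
    by (simp add: algebra_simps)
qed

lemma card_S0_pts: "int (card (S0_pts p)) = int (card (S_pts p)) - 24 * p + 80"
proof -
  let ?N = "{x \<in> cone. x \<noteq> replicate 6 0}" and ?U = "{x \<in> cone. \<forall>i<6. x!i \<noteq> 0}"
  have "?U \<subseteq> ?N" by (auto simp: numeral_eq_Suc)
  then have "card ?N = card (?N - ?U) + card ?U"
    using finite_cone by (simp add: card_Diff_subset card_mono)
  moreover have "int (card (?N - ?U)) = (p - 1) * (24 * p - 80)"
    using card_cone_preimage[of degenerate_triples] sum_weight_degenerate
    by (simp add: cone_nonzero_diff_units_eq degenerate_triples_def subset_iff)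
  ultimately have "(p - 1) * int (card (S_pts p)) =
                   (p - 1) * ((24 * p - 80) + int (card (S0_pts p)))"
    using card_cone_nonzero card_cone_units by (simp add: algebra_simps)
  then show ?thesis using p_gt_2 by simp
qed

lemma n_K4_eq: "1536 * int (n_K4 p) = (p - 1) * int (card (S0_pts p))"
proof -
  have "(p - 1) * int (card (S0_pts p)) =
        int (card {x \<in> cone. square_triple x \<in> distinct_triples})"
    using card_cone_units cone_units_eq by simp
  also have "\<dots> = 64 * int (card K4_triples)"
    using card_cone_preimage[of distinct_triples] sum_weight_distinct
    by (simp add: distinct_triples_def subset_iff)
  finally show ?thesis by (simp add: card_K4_triples card_K4_sets_containing_0)
qed

end

theorem lemma4p1:
  fixes p :: int
  assumes "prime p" and "p mod 4 = 1"
  shows "int (card (S0_pts p)) = int (card (S_pts p)) - 24 * p + 80 \<and>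
         real (n_K4 p) = 1/64 * 1/24 * real_of_int (p - 1) *
           real_of_int (int (card (S_pts p)) - 24 * p + 80)"
proof -
  have "2 < p" using prime_gt_1_int[OF assms(1)] assms(2) by presburger
  then interpret prime_1_mod_4 p using assms by unfold_locales
  have "real_of_int (1536 * int (n_K4 p)) =
        real_of_int ((p - 1) * (int (card (S_pts p)) - 24 * p + 80))"
    using n_K4_eq card_S0_pts by simp
  then show ?thesis using card_S0_pts by simp
qed

end
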